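(* Let $(V,[\cdot,\dots,\cdot],\langle\cdot,\cdot\rangle)$ be a nonzero finite-dimensional indecomposable metric Lie $n$-algebra ($n\ge 2$) which is neither simple nor one-dimensional. Then $V$ possesses a minimal ideal $I$ with $0\neq I\neq V$, and every such minimal ideal satisfies: $I$ is isotropic ($I\subset I^\perp$); $[I,I,V,\dots,V]=0$; $I^\perp$ is a maximal ideal, so that $U:=V/I^\perp$ is simple or one-dimensional; $I^\perp/I$ is a metric Lie $n$-algebra; the inner product induces a nondegenerate pairing $U\otimes I\to\mathbb{R}$, $(u+I^\perp,w)\mapsto\langle u,w\rangle$, so $\dim I=\dim U=:r$; and if $I^\perp/I$ has signature $(p,q)$ then $V$ has signature $(p+r,q+r)$. In particular, if $V$ is lorentzian then $r=1$ and $I^\perp/I$ is euclidean.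
   Context: All vector spaces are real and finite-dimensional. A Lie $n$-algebra is a vector space $V$ with an alternating $n$-linear map $[\cdot,\dots,\cdot]:\Lambda^nV\to V$ such that each $\mathrm{ad}_{x_1,\dots,x_{n-1}}:y\mapsto[x_1,\dots,x_{n-1},y]$ is a derivation of the bracket. An ideal is a subspace $I$ with $[I,V,\dots,V]\subset I$; a minimal ideal is a nonzero ideal containing no ideals other than $0$ and itself; a maximal ideal is an ideal $\neq V$ contained in no ideal other than itself and $V$. A Lie $n$-algebra is simple if it is not one-dimensional and its only ideals are $0$ and itself. A metric Lie $n$-algebra has a nondegenerate symmetric bilinear form $\langle\cdot,\cdot\rangle$ for which every $\mathrm{ad}$ map is skew-symmetric; it is indecomposable if it has no nondegenerate ideal other than $0$ and $V$; lorentzian means the form has exactly one negative eigenvalue; euclidean means positive definite. $W^\perp=\{v:\langle v,w\rangle=0\ \forall w\in W\}$. *)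

theory Defs
  imports "HOL-Analysis.Analysis"
begin

text \<open>A Lie n-algebra structure on a (whole) real vector space type 'v.
  The n-ary bracket is a map br taking a family x of arguments indexed by nat;
  only the arguments x 0, ..., x (n-1) matter.\<close>

definition fin_dim_space :: "'v::real_vector itself \<Rightarrow> bool" where
  "fin_dim_space _ \<longleftrightarrow> (\<exists>S::'v set. finite S \<and> span S = UNIV)"

definition nbracket :: "nat \<Rightarrow> ((nat \<Rightarrow> 'v::real_vector) \<Rightarrow> 'v) \<Rightarrow> bool" where
  "nbracket n br \<longleftrightarrow>
     (\<forall>x y. (\<forall>i<n. x i = y i) \<longrightarrow> br x = br y) \<and>
     (\<forall>x. \<forall>i<n. linear (\<lambda>v. br (x(i := v)))) \<and>
     (\<forall>x i j. i < n \<and> j < n \<and> i \<noteq> j \<and> x i = x j \<longrightarrow> br x = 0)"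

definition ad :: "nat \<Rightarrow> ((nat \<Rightarrow> 'v::real_vector) \<Rightarrow> 'v) \<Rightarrow> (nat \<Rightarrow> 'v) \<Rightarrow> 'v \<Rightarrow> 'v" where
  "ad n br x y = br (x(n - 1 := y))"

definition lie_nalg :: "nat \<Rightarrow> ((nat \<Rightarrow> 'v::real_vector) \<Rightarrow> 'v) \<Rightarrow> bool" where
  "lie_nalg n br \<longleftrightarrow> nbracket n br \<and>
     (\<forall>x y. ad n br x (br y) = (\<Sum>i<n. br (y(i := ad n br x (y i)))))"

definition lie_ideal :: "nat \<Rightarrow> ((nat \<Rightarrow> 'v::real_vector) \<Rightarrow> 'v) \<Rightarrow> 'v set \<Rightarrow> bool" where
  "lie_ideal n br I \<longleftrightarrow> subspace I \<and> (\<forall>x. x 0 \<in> I \<longrightarrow> br x \<in> I)"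

definition minimal_ideal :: "nat \<Rightarrow> ((nat \<Rightarrow> 'v::real_vector) \<Rightarrow> 'v) \<Rightarrow> 'v set \<Rightarrow> bool" where
  "minimal_ideal n br I \<longleftrightarrow> lie_ideal n br I \<and> I \<noteq> {0} \<and>
     (\<forall>J. lie_ideal n br J \<and> J \<subseteq> I \<longrightarrow> J = {0} \<or> J = I)"

definition maximal_ideal :: "nat \<Rightarrow> ((nat \<Rightarrow> 'v::real_vector) \<Rightarrow> 'v) \<Rightarrow> 'v set \<Rightarrow> bool" where
  "maximal_ideal n br I \<longleftrightarrow> lie_ideal n br I \<and> I \<noteq> UNIV \<and>
     (\<forall>J. lie_ideal n br J \<and> I \<subseteq> J \<longrightarrow> J = I \<or> J = UNIV)"

definition one_dim :: "'v::real_vector itself \<Rightarrow> bool" where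
  "one_dim _ \<longleftrightarrow> dim (UNIV::'v set) = 1"

definition simple_nalg :: "nat \<Rightarrow> ((nat \<Rightarrow> 'v::real_vector) \<Rightarrow> 'v) \<Rightarrow> bool" where
  "simple_nalg n br \<longleftrightarrow> \<not> one_dim TYPE('v) \<and>
     (\<forall>I. lie_ideal n br I \<longrightarrow> I = {0} \<or> I = UNIV)"

definition perp :: "('v::real_vector \<Rightarrow> 'v \<Rightarrow> real) \<Rightarrow> 'v set \<Rightarrow> 'v set" where
  "perp B W = {v. \<forall>w\<in>W. B v w = 0}"

definition metric_form :: "('v::real_vector \<Rightarrow> 'v \<Rightarrow> real) \<Rightarrow> bool" where
  "metric_form B \<longleftrightarrow> (\<forall>x y. B x y = B y x) \<and> (\<forall>x. linear (B x)) \<and>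
     (\<forall>x. (\<forall>y. B x y = 0) \<longrightarrow> x = 0)"

definition metric_lie_nalg ::
  "nat \<Rightarrow> ((nat \<Rightarrow> 'v::real_vector) \<Rightarrow> 'v) \<Rightarrow> ('v \<Rightarrow> 'v \<Rightarrow> real) \<Rightarrow> bool" where
  "metric_lie_nalg n br B \<longleftrightarrow> lie_nalg n br \<and> metric_form B \<and>
     (\<forall>x y z. B (ad n br x y) z = - B y (ad n br x z))"

definition nondegenerate_on :: "('v::real_vector \<Rightarrow> 'v \<Rightarrow> real) \<Rightarrow> 'v set \<Rightarrow> bool" where
  "nondegenerate_on B W \<longleftrightarrow> (\<forall>x\<in>W. (\<forall>y\<in>W. B x y = 0) \<longrightarrow> x = 0)"

definition indecomposable ::
  "nat \<Rightarrow> ((nat \<Rightarrow> 'v::real_vector) \<Rightarrow> 'v) \<Rightarrow> ('v \<Rightarrow> 'v \<Rightarrow> real) \<Rightarrow> bool" where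
  "indecomposable n br B \<longleftrightarrow>
     (\<forall>I. lie_ideal n br I \<and> nondegenerate_on B I \<longrightarrow> I = {0} \<or> I = UNIV)"

text \<open>Signature (p,q) of a symmetric bilinear form on the whole space, via a
  B-orthogonal basis (diagonalisation of the Gram matrix): p diagonal entries
  positive, q negative.\<close>
definition has_signature :: "('v::real_vector \<Rightarrow> 'v \<Rightarrow> real) \<Rightarrow> nat \<Rightarrow> nat \<Rightarrow> bool" where
  "has_signature B p q \<longleftrightarrow> (\<exists>b. finite b \<and> independent b \<and> span b = UNIV \<and>
     (\<forall>x\<in>b. \<forall>y\<in>b. x \<noteq> y \<longrightarrow> B x y = 0) \<and>
     card {x\<in>b. B x x > 0} = p \<and> card {x\<in>b. B x x < 0} = q)"

definition lorentzian :: "('v::real_vector \<Rightarrow> 'v \<Rightarrow> real) \<Rightarrow> bool" where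
  "lorentzian B \<longleftrightarrow> (\<exists>p. has_signature B p 1)"

definition euclidean_form :: "('v::real_vector \<Rightarrow> 'v \<Rightarrow> real) \<Rightarrow> bool" where
  "euclidean_form B \<longleftrightarrow> (\<forall>x. x \<noteq> 0 \<longrightarrow> B x x > 0)"

end

theory Submission
  imports Defs
begin

text \<open>
  Minimal ideals exist by finite dimensionality. Since I \<inter> perp B I is an ideal inside I
  and I cannot be nondegenerate, I is isotropic; invariance of the form then kills
  [I, I, V, ..., V]. Orthogonal complementation reverses inclusions of ideals and is an
  involution, so perp B I is a maximal ideal and V / perp B I is simple or one-dimensional;
  the form pairs V / perp B I nondegenerately with I. On W = perp B I / I the bracket and the
  form descend, and V decomposes orthogonally into lifts of W plus hyperbolic planes spanned by
  a basis of I and dual partners, which shifts the signature by (dim I, dim I).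
\<close>

lemma independent_coeff_zero:
  fixes C :: "'a::real_vector set"
  assumes "finite C" "independent C" "(\<Sum>c\<in>C. a c *\<^sub>R c) = 0" "c \<in> C"
  shows "a c = 0"
  using assms dependent_finite[of C] by auto

definition lift_along :: "('a \<Rightarrow> 'b) \<Rightarrow> 'a set \<Rightarrow> 'b \<Rightarrow> 'a" where
  "lift_along f S y = (SOME x. x \<in> S \<and> f x = y)"

lemma lift_along:
  assumes "f ` S = UNIV"
  shows "lift_along f S y \<in> S" "f (lift_along f S y) = y"
proof -
  have "\<exists>x. x \<in> S \<and> f x = y" using assms by (metis UNIV_I imageE)
  then have "lift_along f S y \<in> S \<and> f (lift_along f S y) = y"
    unfolding lift_along_def by (rule someI_ex)
  then show "lift_along f S y \<in> S" "f (lift_along f S y) = y" by auto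
qed

lemma orthogonal_basis_self_nonzero:
  fixes F :: "'a::real_vector \<Rightarrow> 'a \<Rightarrow> real"
  assumes mf: "metric_form F" and ind: "independent b" and sp: "span b = UNIV"
    and orth: "\<forall>x\<in>b. \<forall>y\<in>b. x \<noteq> y \<longrightarrow> F x y = 0" and x: "x \<in> b"
  shows "F x x \<noteq> 0"
proof
  assume h: "F x x = 0"
  have lin: "linear (F x)" using mf unfolding metric_form_def by auto
  have "F x y = 0" if "y \<in> b" for y using orth x that h by (cases "x = y") auto
  then have "F x y = 0" for y using linear_eq_0_on_span[OF lin, of b y] sp by auto
  then have "x = 0" using mf unfolding metric_form_def by auto
  then show False using x ind dependent_zero by blast
qed

text \<open>A finite-dimensional real vector space with a nondegenerate symmetric bilinear form.
  A chosen basis makes the library's finite-dimensional linear algebra available as fd.\<close>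
locale fin_metric_space =
  fixes B :: "'v::real_vector \<Rightarrow> 'v \<Rightarrow> real"
  assumes fin_dim: "fin_dim_space TYPE('v)" and metric: "metric_form B"
begin

definition fin_basis :: "'v set" where
  "fin_basis = (SOME b. finite b \<and> independent b \<and> span b = UNIV)"

lemma fin_basis: "finite fin_basis" "independent fin_basis" "span fin_basis = UNIV"
proof -
  obtain S :: "'v set" where S: "finite S" "span S = UNIV"
    using fin_dim unfolding fin_dim_space_def by blast
  obtain b where b: "b \<subseteq> S" "independent b" "S \<subseteq> span b"
    using maximal_independent_subset[of S] by blast
  have "finite b \<and> independent b \<and> span b = UNIV"
    using b S finite_subset span_minimal[OF b(3) subspace_span] by auto
  then have "finite fin_basis \<and> independent fin_basis \<and> span fin_basis = UNIV"
    unfolding fin_basis_def by (rule someI)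
  then show "finite fin_basis" "independent fin_basis" "span fin_basis = UNIV" by auto
qed

sublocale fd: finite_dimensional_vector_space "scaleR :: real \<Rightarrow> 'v \<Rightarrow> 'v" fin_basis
  rewrites "module.dependent (*\<^sub>R) = dependent"
    and "module.representation (*\<^sub>R) = representation"
    and "module.subspace (*\<^sub>R) = subspace"
    and "module.span (*\<^sub>R) = span"
    and "vector_space.extend_basis (*\<^sub>R) = extend_basis"
    and "vector_space.dim (*\<^sub>R) = dim"
    and "Vector_Spaces.linear (*\<^sub>R) (*\<^sub>R) = linear"
    and "Vector_Spaces.linear (*) (*\<^sub>R) = linear"
  by unfold_locales (use fin_basis in \<open>auto simp add: dependent_raw_def representation_raw_def
      subspace_raw_def span_raw_def extend_basis_raw_def dim_raw_def linear_def
      real_scaleR_def[abs_def]\<close>)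

lemma B_sym: "B x y = B y x" using metric unfolding metric_form_def by auto
lemma linear_B: "linear (B x)" using metric unfolding metric_form_def by auto
lemma B_nondegenerate: "(\<And>y. B x y = 0) \<Longrightarrow> x = 0" using metric unfolding metric_form_def by auto

lemma B_right_simps [simp]:
  "B x (y + z) = B x y + B x z" "B x (c *\<^sub>R y) = c * B x y" "B x (y - z) = B x y - B x z"
  "B x (- y) = - B x y" "B x 0 = 0"
  using linear_add[OF linear_B] linear_scale[OF linear_B] linear_diff[OF linear_B]
    linear_neg[OF linear_B] linear_0[OF linear_B] by auto

lemma B_left_simps [simp]:
  "B (y + z) x = B y x + B z x" "B (c *\<^sub>R y) x = c * B y x" "B (y - z) x = B y x - B z x"
  "B (- y) x = - B y x" "B 0 x = 0"
  by (simp_all add: B_sym[of _ x])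

lemma B_sum_right: "B x (\<Sum>i\<in>S. f i) = (\<Sum>i\<in>S. B x (f i))"
  using linear_sum[OF linear_B] .

lemma B_sum_left: "B (\<Sum>i\<in>S. f i) x = (\<Sum>i\<in>S. B (f i) x)"
  by (simp add: B_sym[of _ x] B_sum_right)

lemma riesz:
  assumes g: "linear g" shows "\<exists>v. \<forall>x. B v x = g x"
proof -
  define Psi where "Psi v = (\<Sum>c\<in>fin_basis. B v c *\<^sub>R c)" for v
  have lin: "linear Psi"
    by (rule linearI) (auto simp: Psi_def scaleR_add_left sum.distrib scaleR_sum_right)
  have "inj Psi"
  proof (rule linear_inj_on_iff_eq_0[OF lin subspace_UNIV, THEN iffD2], intro ballI impI)
    fix v assume "Psi v = 0"
    then have "\<forall>c\<in>fin_basis. B v c = 0"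
      using independent_coeff_zero[OF fin_basis(1,2)] unfolding Psi_def by blast
    then have "B v x = 0" for x using linear_eq_0_on_span[OF linear_B, of fin_basis v] fin_basis by auto
    then show "v = 0" using B_nondegenerate by blast
  qed
  then obtain v where "Psi v = (\<Sum>c\<in>fin_basis. g c *\<^sub>R c)"
    using fd.linear_inj_imp_surj[OF lin] by (metis surjD)
  then have "(\<Sum>c\<in>fin_basis. (B v c - g c) *\<^sub>R c) = 0"
    unfolding Psi_def by (simp add: scaleR_diff_left sum_subtractf)
  then have "\<forall>c\<in>fin_basis. B v c = g c"
    using independent_coeff_zero[OF fin_basis(1,2)] by fastforce
  then have "B v x = g x" for x
    using linear_eq_on_span[OF linear_B g, of fin_basis] fin_basis by auto
  then show ?thesis by blast
qed

lemma interpolate: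
  assumes "independent X" shows "\<exists>v. \<forall>x\<in>X. B v x = t x"
proof -
  obtain g :: "'v \<Rightarrow> real" where "linear g" "\<forall>x\<in>X. g x = t x"
    using linear_independent_extend[OF assms] by fastforce
  then show ?thesis using riesz by metis
qed

text \<open>Every subspace K of a subspace S has a complement in S: extend a basis of K to one of S.\<close>
lemma complement_exists:
  fixes S K :: "'v set"
  assumes S: "subspace S" and K: "subspace K" "K \<subseteq> S"
  obtains D where "independent D" "span D \<subseteq> S" "S \<subseteq> {x + y | x y. x \<in> K \<and> y \<in> span D}"
    "K \<inter> span D \<subseteq> {0}" "dim S = dim K + card D"
proof -
  obtain Bk where Bk: "Bk \<subseteq> K" "independent Bk" "K \<subseteq> span Bk" "card Bk = dim K"
    using basis_exists by blast
  obtain C where C: "Bk \<subseteq> C" "C \<subseteq> S" "independent C" "S \<subseteq> span C"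
    using maximal_independent_subset_extend[OF _ Bk(2), of S] Bk(1) K(2) by blast
  define D where "D = C - Bk"
  have indD: "independent D" using C(3) unfolding D_def by (metis Diff_subset independent_mono)
  have cardC: "card C = card Bk + card D" "card C = dim S"
    using fd.finiteI_independent[OF C(3)] C basis_card_eq_dim[OF C(2) C(4) C(3)] unfolding D_def
    by (metis card_Diff_subset finite_subset le_add_diff_inverse card_mono)+
  have spanD_S: "span D \<subseteq> S" using C(2) D_def span_minimal[OF _ S] by blast
  have decomp: "S \<subseteq> {x + y | x y. x \<in> K \<and> y \<in> span D}"
  proof
    fix s assume "s \<in> S"
    then have "s \<in> span (Bk \<union> D)" using C(4) C(1) D_def by (metis Diff_partition subsetD)
    then show "s \<in> {x + y | x y. x \<in> K \<and> y \<in> span D}"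
      unfolding span_Un using span_minimal[OF Bk(1) K(1)] by blast
  qed
  have "dim {x + y | x y. x \<in> K \<and> y \<in> span D} + dim (K \<inter> span D) = dim K + dim (span D)"
    using fd.dim_sums_Int[OF K(1) subspace_span] .
  then have "dim (K \<inter> span D) = 0"
    using fd.dim_subset[OF decomp] cardC dim_span_eq_card_independent[OF indD] Bk(4) by linarith
  then have "K \<inter> span D \<subseteq> {0}" by simp
  then show ?thesis using that indD spanD_S decomp cardC Bk(4) by simp
qed

text \<open>Rank--nullity for a linear map restricted to a subspace: f is injective on a complement
  of its kernel, and maps it onto the image.\<close>
lemma rank_nullity:
  fixes f :: "'v \<Rightarrow> 'b::real_vector"
  assumes f: "linear f" and S: "subspace S"
  shows "dim S = dim {x\<in>S. f x = 0} + dim (f ` S)"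
proof -
  define K where "K = {x\<in>S. f x = 0}"
  have K: "subspace K" "K \<subseteq> S" unfolding K_def
    using subspace_inter[OF S linear_subspace_kernel[OF f]] by (auto simp: Int_def)
  obtain D where D: "independent D" "span D \<subseteq> S" "S \<subseteq> {x + y | x y. x \<in> K \<and> y \<in> span D}"
    "K \<inter> span D \<subseteq> {0}" "dim S = dim K + card D"
    using complement_exists[OF S K] by blast
  have injD: "inj_on f (span D)"
  proof (rule linear_inj_on_iff_eq_0[OF f subspace_span, THEN iffD2], intro ballI impI)
    fix x assume "x \<in> span D" "f x = 0"
    then show "x = 0" using D(2,4) K_def by auto
  qed
  have img: "f ` S = f ` span D"
  proof
    show "f ` S \<subseteq> f ` span D"
    proof
      fix z assume "z \<in> f ` S"
      then obtain k d where kd: "z = f (k + d)" "k \<in> K" "d \<in> span D" using D(3) by blast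
      then have "z = f d" using K_def linear_add[OF f] by simp
      then show "z \<in> f ` span D" using kd by auto
    qed
  qed (use D(2) in auto)
  have "independent (f ` D)" using linear_independent_injective_image[OF f D(1) injD] .
  moreover have "card (f ` D) = card D"
    using card_image[OF inj_on_subset[OF injD span_superset]] .
  ultimately have "dim (f ` S) = card D"
    using img linear_span_image[OF f] dim_span_eq_card_independent by metis
  then show ?thesis using D(5) K_def by simp
qed

lemma perp_subspace: "subspace (perp B W)"
  unfolding perp_def subspace_def by auto

lemma perp_antimono: "V \<subseteq> W \<Longrightarrow> perp B W \<subseteq> perp B V"
  unfolding perp_def by auto

lemma perp_UNIV: "perp B UNIV = {0}"
  unfolding perp_def using B_nondegenerate by auto

lemma dim_perp:
  assumes W: "subspace W" shows "dim W + dim (perp B W) = dim (UNIV::'v set)"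
proof -
  obtain Wb where Wb: "Wb \<subseteq> W" "independent Wb" "W \<subseteq> span Wb" "card Wb = dim W"
    using basis_exists by blast
  have finW: "finite Wb" using fd.finiteI_independent[OF Wb(2)] .
  \<comment> \<open>The map v \<mapsto> (B v w)_{w \<in> Wb}, realised inside span Wb, has kernel perp B W
    and is onto span Wb.\<close>
  define phi where "phi v = (\<Sum>w\<in>Wb. B v w *\<^sub>R w)" for v
  have lin: "linear phi"
    by (rule linearI) (auto simp: phi_def scaleR_add_left sum.distrib scaleR_sum_right)
  have ker: "{x\<in>UNIV. phi x = 0} = perp B W"
  proof (intro set_eqI iffI)
    fix x assume "x \<in> {x\<in>UNIV. phi x = 0}"
    then have "\<forall>w\<in>Wb. B x w = 0"
      using independent_coeff_zero[OF finW Wb(2)] unfolding phi_def by auto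
    then show "x \<in> perp B W" unfolding perp_def using linear_eq_0_on_span[OF linear_B] Wb(3) by blast
  next
    fix x assume "x \<in> perp B W"
    then have "\<forall>w\<in>Wb. B x w = 0" using Wb(1) unfolding perp_def by auto
    then show "x \<in> {x\<in>UNIV. phi x = 0}" unfolding phi_def by simp
  qed
  have "phi ` UNIV = span Wb"
  proof
    have "phi v \<in> span Wb" for v
      unfolding phi_def by (rule span_sum) (rule span_scale, rule span_base, assumption)
    then show "phi ` UNIV \<subseteq> span Wb" by auto
    have "Wb \<subseteq> phi ` UNIV"
    proof
      fix w0 assume w0: "w0 \<in> Wb"
      obtain v where v: "\<forall>w\<in>Wb. B v w = (if w = w0 then 1 else 0)"
        using interpolate[OF Wb(2), of "\<lambda>w. if w = w0 then 1 else 0"] by blast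
      have "phi v = (\<Sum>w\<in>Wb. if w = w0 then w else 0)"
        unfolding phi_def by (rule sum.cong) (auto simp: v)
      also have "\<dots> = w0" using w0 finW by (simp add: sum.delta)
      finally show "w0 \<in> phi ` UNIV" by (metis rangeI)
    qed
    then show "span Wb \<subseteq> phi ` UNIV"
      using span_minimal linear_subspace_image[OF lin subspace_UNIV] by blast
  qed
  then show ?thesis using rank_nullity[OF lin subspace_UNIV] ker
      dim_span_eq_card_independent[OF Wb(2)] Wb(4) by simp
qed

lemma perp_perp:
  assumes W: "subspace W" shows "perp B (perp B W) = W"
proof -
  have sub: "W \<subseteq> perp B (perp B W)" unfolding perp_def by (auto simp: B_sym)
  have "dim (perp B W) + dim (perp B (perp B W)) = dim (UNIV::'v set)"
    using dim_perp[OF perp_subspace] .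
  then show ?thesis
    using fd.subspace_dim_equal[OF W perp_subspace sub] dim_perp[OF W] by simp
qed

lemma orthogonal_independent:
  assumes fin: "finite G" and orth: "\<And>x y. x \<in> G \<Longrightarrow> y \<in> G \<Longrightarrow> x \<noteq> y \<Longrightarrow> B x y = 0"
    and nonnull: "\<And>x. x \<in> G \<Longrightarrow> B x x \<noteq> 0"
  shows "independent G"
proof -
  have "u v = 0" if s: "(\<Sum>w\<in>G. u w *\<^sub>R w) = 0" and v: "v \<in> G" for u v
  proof -
    have "0 = (\<Sum>w\<in>G. u w * B w v)" using arg_cong[OF s, of "\<lambda>x. B x v"] by (simp add: B_sum_left)
    also have "\<dots> = u v * B v v + (\<Sum>w\<in>G-{v}. u w * B w v)" using sum.remove[OF fin v] .
    also have "(\<Sum>w\<in>G-{v}. u w * B w v) = 0" by (rule sum.neutral) (use orth v in auto)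
    finally show ?thesis using nonnull[OF v] by simp
  qed
  then show ?thesis using dependent_finite[OF fin] by blast
qed

lemma orthogonal_family_signature:
  assumes fin: "finite K"
    and orth: "\<And>i j. i \<in> K \<Longrightarrow> j \<in> K \<Longrightarrow> i \<noteq> j \<Longrightarrow> B (g i) (g j) = 0"
    and nonnull: "\<And>i. i \<in> K \<Longrightarrow> B (g i) (g i) \<noteq> 0"
    and card: "card K = dim (UNIV::'v set)"
  shows "has_signature B (card {i\<in>K. B (g i) (g i) > 0}) (card {i\<in>K. B (g i) (g i) < 0})"
proof -
  have inj: "inj_on g K"
  proof (rule inj_onI)
    fix i j assume ij: "i \<in> K" "j \<in> K" "g i = g j"
    show "i = j"
    proof (rule ccontr)
      assume "i \<noteq> j"
      then have "B (g i) (g i) = 0" using orth[OF ij(1,2)] ij(3) by simp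
      then show False using nonnull[OF ij(1)] by simp
    qed
  qed
  have orthG: "\<forall>x\<in>g ` K. \<forall>y\<in>g ` K. x \<noteq> y \<longrightarrow> B x y = 0"
  proof (intro ballI impI)
    fix x y assume "x \<in> g ` K" "y \<in> g ` K" "x \<noteq> y"
    then obtain i j where "i \<in> K" "j \<in> K" "x = g i" "y = g j" "i \<noteq> j" by blast
    then show "B x y = 0" using orth by simp
  qed
  have indG: "independent (g ` K)"
  proof (rule orthogonal_independent)
    show "B x x \<noteq> 0" if "x \<in> g ` K" for x using nonnull that by blast
    show "B x y = 0" if "x \<in> g ` K" "y \<in> g ` K" "x \<noteq> y" for x y using orthG that by blast
  qed (use fin in simp)
  have "card (g ` K) = dim (UNIV::'v set)" using card card_image[OF inj] by simp
  then have "UNIV \<subseteq> span (g ` K)"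
    using fd.card_eq_dim[of "g ` K" UNIV] fin indG by blast
  then have spanG: "span (g ` K) = UNIV" by blast
  have count: "card {x\<in>g ` K. P x} = card {i\<in>K. P (g i)}" for P
  proof -
    have "{x\<in>g ` K. P x} = g ` {i\<in>K. P (g i)}" by auto
    then show ?thesis using card_image[OF inj_on_subset[OF inj]] by simp
  qed
  show ?thesis unfolding has_signature_def
    by (rule exI[of _ "g ` K"]) (simp add: fin indG spanG orthG count[of "\<lambda>x. B x x > 0"]
        count[of "\<lambda>x. B x x < 0"])
qed

lemma hyperbolic_partners:
  assumes ind: "independent (E \<union> C)" and disj: "E \<inter> C = {}"
    and iso: "\<And>x y. x \<in> E \<Longrightarrow> y \<in> E \<union> C \<Longrightarrow> B x y = 0"
  obtains f where "\<And>e g. e \<in> E \<Longrightarrow> g \<in> E \<Longrightarrow> B (f e) g = (if g = e then 1 else 0)"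
    and "\<And>e c. e \<in> E \<Longrightarrow> c \<in> C \<Longrightarrow> B (f e) c = 0"
    and "\<And>e g. e \<in> E \<Longrightarrow> g \<in> E \<Longrightarrow> B (f e) (f g) = 0"
proof -
  have finE: "finite E" using fd.finiteI_independent[OF ind] by simp
  have "\<forall>e. \<exists>v. \<forall>x\<in>E \<union> C. B v x = (if x = e then 1 else 0)"
  proof
    fix e show "\<exists>v. \<forall>x\<in>E \<union> C. B v x = (if x = e then 1 else 0)"
      using interpolate[OF ind, of "\<lambda>x. if x = e then 1 else 0"] by simp
  qed
  then obtain f0 where f0: "\<And>e x. x \<in> E \<union> C \<Longrightarrow> B (f0 e) x = (if x = e then 1 else 0)"
    by metis
  define c where "c e e' = B (f0 e) (f0 e')" for e e'
  \<comment> \<open>Correct f0 by half of its Gram matrix along E to make the partners isotropic.\<close>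
  define f where "f e = f0 e - (1/2) *\<^sub>R (\<Sum>e'\<in>E. c e e' *\<^sub>R e')" for e
  have f_left: "B (f e) y = B (f0 e) y - (1/2) * (\<Sum>e'\<in>E. c e e' * B e' y)" for e y
    unfolding f_def by (simp add: B_sum_left)
  have f_EC: "B (f e) y = B (f0 e) y" if "y \<in> E \<union> C" for e y
    using f_left[of e y] iso that by (simp add: sum.neutral)
  have f_E: "B (f e) g = (if g = e then 1 else 0)" if "g \<in> E" for e g
    using f_EC f0 that by simp
  have f_f: "B (f e) (f g) = 0" if e: "e \<in> E" and g: "g \<in> E" for e g
  proof -
    have "(\<Sum>e'\<in>E. c g e' * B (f e) e') = (\<Sum>e'\<in>E. if e' = e then c g e' else 0)"
      by (rule sum.cong) (auto simp: f_E)
    then have s1: "(\<Sum>e'\<in>E. c g e' * B (f e) e') = c g e" using e finE by simp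
    have "(\<Sum>e'\<in>E. c e e' * B e' (f0 g)) = (\<Sum>e'\<in>E. if e' = g then c e e' else 0)"
      by (rule sum.cong) (auto simp: B_sym[of _ "f0 g"] f0)
    then have s2: "(\<Sum>e'\<in>E. c e e' * B e' (f0 g)) = c e g" using g finE by simp
    have "B (f e) (f g) = B (f e) (f0 g) - (1/2) * (\<Sum>e'\<in>E. c g e' * B (f e) e')"
      unfolding f_def[of g] by (simp add: B_sum_right)
    also have "\<dots> = c e g - (1/2) * c e g - (1/2) * c g e"
      using s1 s2 f_left[of e "f0 g"] by (simp add: c_def)
    also have "\<dots> = 0" using B_sym[of "f0 g" "f0 e"] unfolding c_def by simp
    finally show ?thesis .
  qed
  show ?thesis
  proof (rule that)
    show "B (f e) c = 0" if "e \<in> E" "c \<in> C" for e c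
      using f_EC[of c e] f0[of c e] disj that by auto
  qed (use f_E f_f in auto)
qed

lemma positive_on_span:
  assumes fin: "finite Q" and orth: "\<And>x y. x \<in> Q \<Longrightarrow> y \<in> Q \<Longrightarrow> x \<noteq> y \<Longrightarrow> B x y = 0"
    and pos: "\<And>x. x \<in> Q \<Longrightarrow> B x x > 0"
    and x: "x \<in> span Q" "x \<noteq> 0"
  shows "B x x > 0"
proof -
  obtain u where u: "x = (\<Sum>q\<in>Q. u q *\<^sub>R q)" using x span_finite[OF fin] by auto
  have Bq: "B x q = u q * B q q" if q: "q \<in> Q" for q
  proof -
    have "B x q = (\<Sum>w\<in>Q. u w * B w q)" unfolding u by (simp add: B_sum_left)
    also have "\<dots> = u q * B q q + (\<Sum>w\<in>Q-{q}. u w * B w q)" using sum.remove[OF fin q] .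
    also have "(\<Sum>w\<in>Q-{q}. u w * B w q) = 0" by (rule sum.neutral) (use orth q in auto)
    finally show ?thesis by simp
  qed
  have "B x x = B x (\<Sum>q\<in>Q. u q *\<^sub>R q)" using u by simp
  also have "\<dots> = (\<Sum>q\<in>Q. u q * B x q)" by (simp add: B_sum_right)
  also have "\<dots> = (\<Sum>q\<in>Q. (u q)\<^sup>2 * B q q)"
    by (rule sum.cong[OF refl]) (simp add: Bq power2_eq_square)
  finally have Bxx: "B x x = (\<Sum>q\<in>Q. (u q)\<^sup>2 * B q q)" .
  have nonneg: "0 \<le> (u q)\<^sup>2 * B q q" if "q \<in> Q" for q using pos[OF that] by simp
  show ?thesis
  proof (rule ccontr)
    assume "\<not> B x x > 0"
    moreover have "0 \<le> (\<Sum>q\<in>Q. (u q)\<^sup>2 * B q q)" by (rule sum_nonneg) (rule nonneg)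
    ultimately have "(\<Sum>q\<in>Q. (u q)\<^sup>2 * B q q) = 0" using Bxx by linarith
    then have "\<forall>q\<in>Q. (u q)\<^sup>2 * B q q = 0"
      by (subst (asm) sum_nonneg_eq_0_iff[OF fin]) (use nonneg in auto)
    then have "\<forall>q\<in>Q. u q = 0" using pos by fastforce
    then show False using u x(2) by simp
  qed
qed

text \<open>In a lorentzian space every subspace on which the form is nowhere positive is at most
  one-dimensional: it meets the span of the positive basis vectors trivially.\<close>
lemma lorentzian_nonpositive_subspace:
  assumes lor: "lorentzian B" and S: "subspace S" and nonpos: "\<And>x. x \<in> S \<Longrightarrow> B x x \<le> 0"
  shows "dim S \<le> 1"
proof -
  obtain p c where c: "finite c" "independent c" "span c = UNIV"
      "\<forall>x\<in>c. \<forall>y\<in>c. x \<noteq> y \<longrightarrow> B x y = 0" "card {x\<in>c. B x x < 0} = 1"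
    using lor unfolding lorentzian_def has_signature_def by blast
  define Q where "Q = {x\<in>c. B x x > 0}"
  define N where "N = {x\<in>c. B x x < 0}"
  have cQN: "c = Q \<union> N"
    using orthogonal_basis_self_nonzero[OF metric c(2-4)] unfolding Q_def N_def by (auto simp: neq_iff)
  have "card c = card Q + card N"
    by (subst cQN, rule card_Un_disjoint) (use c(1) in \<open>auto simp: Q_def N_def\<close>)
  then have dimV: "dim (UNIV::'v set) = card Q + 1"
    using c basis_card_eq_dim[of c UNIV] N_def by simp
  have "independent Q" by (rule independent_mono[OF c(2)]) (auto simp: Q_def)
  then have dimQ: "dim (span Q) = card Q" by (rule dim_span_eq_card_independent)
  have "S \<inter> span Q \<subseteq> {0}"
  proof
    fix x assume x: "x \<in> S \<inter> span Q"
    show "x \<in> {0}"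
    proof (rule ccontr)
      assume "x \<notin> {0}"
      then have "B x x > 0"
        by (intro positive_on_span[of Q x]) (use c(1,4) x in \<open>auto simp: Q_def\<close>)
      then show False using nonpos x by force
    qed
  qed
  then have "dim (S \<inter> span Q) = 0" by simp
  moreover have "dim {x + y |x y. x \<in> S \<and> y \<in> span Q} + dim (S \<inter> span Q) = dim S + dim (span Q)"
    using fd.dim_sums_Int[OF S subspace_span] .
  moreover have "dim {x + y |x y. x \<in> S \<and> y \<in> span Q} \<le> dim (UNIV::'v set)"
    by (rule fd.dim_subset) simp
  ultimately show ?thesis using dimQ dimV by linarith
qed

end

context fin_metric_space begin

lemma reduced_form_exists:
  fixes rho :: "'v \<Rightarrow> 'w::real_vector"
  assumes rho: "linear rho" and onto: "rho ` perp B I = UNIV"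
    and ker: "{v \<in> perp B I. rho v = 0} = I"
  shows "\<exists>BW. \<forall>a\<in>perp B I. \<forall>b\<in>perp B I. BW (rho a) (rho b) = B a b"
proof -
  define L where "L = lift_along rho (perp B I)"
  have L: "L w \<in> perp B I" "rho (L w) = w" for w using lift_along[OF onto] L_def by auto
  have diff_I: "a - L (rho a) \<in> I" if "a \<in> perp B I" for a
  proof -
    have "a - L (rho a) \<in> perp B I" using that L(1) subspace_diff[OF perp_subspace] by blast
    moreover have "rho (a - L (rho a)) = 0" using L(2) linear_diff[OF rho] by simp
    ultimately show ?thesis using ker by blast
  qed
  have "B (L (rho a)) (L (rho b)) = B a b" if a: "a \<in> perp B I" and b: "b \<in> perp B I" for a b
  proof -
    have "B b (a - L (rho a)) = 0" using diff_I[OF a] b unfolding perp_def by blast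
    then have "B (a - L (rho a)) b = 0" by (simp add: B_sym)
    moreover have "B (L (rho a)) (b - L (rho b)) = 0" using diff_I[OF b] L(1) unfolding perp_def by blast
    ultimately show ?thesis by simp
  qed
  then show ?thesis by (intro exI[of _ "\<lambda>u v. B (L u) (L v)"]) blast
qed

end

text \<open>The reduction of a nondegenerate space along a subspace I: rho identifies perp B I / I
  with 'w, and BW is the form induced on 'w.\<close>
locale isotropic_reduction = fin_metric_space B for B :: "'v::real_vector \<Rightarrow> 'v \<Rightarrow> real" +
  fixes I :: "'v set" and rho :: "'v \<Rightarrow> 'w::real_vector" and BW :: "'w \<Rightarrow> 'w \<Rightarrow> real"
  assumes rho_linear: "linear rho" and rho_onto: "rho ` perp B I = UNIV"
    and rho_kernel: "{v \<in> perp B I. rho v = 0} = I"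
    and BW_rho: "\<And>a b. a \<in> perp B I \<Longrightarrow> b \<in> perp B I \<Longrightarrow> BW (rho a) (rho b) = B a b"
begin

abbreviation L :: "'w \<Rightarrow> 'v" where "L \<equiv> lift_along rho (perp B I)"

lemma L_perp: "L w \<in> perp B I" and rho_L [simp]: "rho (L w) = w"
  using lift_along[OF rho_onto] by auto

lemma I_isotropic: "I \<subseteq> perp B I"
  using rho_kernel by auto

lemma rho_I: "v \<in> I \<Longrightarrow> rho v = 0"
  using rho_kernel by auto

lemma I_subspace: "subspace I"
proof -
  have "subspace (perp B I \<inter> {x. rho x = 0})"
    by (rule subspace_inter[OF perp_subspace linear_subspace_kernel[OF rho_linear]])
  also have "perp B I \<inter> {x. rho x = 0} = I" using rho_kernel by auto
  finally show ?thesis .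
qed

lemma B_I_perp: "x \<in> I \<Longrightarrow> y \<in> perp B I \<Longrightarrow> B x y = 0"
  unfolding perp_def by (auto simp: B_sym)

text \<open>The reduced form is computed on lifts, and it is again nondegenerate: a vector orthogonal
  to all of perp B I lies in I.\<close>
lemma BW_L: "BW u v = B (L u) (L v)"
  using BW_rho[OF L_perp L_perp] by simp

lemma reduced_metric_form: "metric_form BW"
  unfolding metric_form_def
proof (intro conjI allI impI)
  fix u v show "BW u v = BW v u" by (simp add: BW_L B_sym)
next
  fix u show "linear (BW u)"
  proof (rule linearI)
    fix v v'
    have "BW u (v + v') = BW (rho (L u)) (rho (L v + L v'))" by (simp add: linear_add[OF rho_linear])
    also have "\<dots> = B (L u) (L v + L v')"
      using BW_rho L_perp subspace_add[OF perp_subspace] by blast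
    finally show "BW u (v + v') = BW u v + BW u v'" by (simp add: BW_L)
  next
    fix c v
    have "BW u (c *\<^sub>R v) = BW (rho (L u)) (rho (c *\<^sub>R L v))" by (simp add: linear_scale[OF rho_linear])
    also have "\<dots> = B (L u) (c *\<^sub>R L v)"
      using BW_rho L_perp subspace_scale[OF perp_subspace] by blast
    finally show "BW u (c *\<^sub>R v) = c *\<^sub>R BW u v" by (simp add: BW_L)
  qed
next
  fix u assume h: "\<forall>v. BW u v = 0"
  have "B (L u) b = 0" if "b \<in> perp B I" for b
    using h BW_rho[OF L_perp that, of u] by simp
  then have "L u \<in> perp B (perp B I)" unfolding perp_def by blast
  then have "L u \<in> I" using perp_perp[OF I_subspace] by simp
  then show "u = 0" using rho_I[of "L u"] by simp
qed

lemma dim_perp_reduction: "dim (perp B I) = dim I + dim (UNIV::'w set)"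
  using rank_nullity[OF rho_linear perp_subspace] rho_kernel rho_onto by simp

lemma lifted_basis_independent:
  assumes bw: "finite bw" "independent bw" "span bw = UNIV"
    and E: "E \<subseteq> I" "independent E" "I \<subseteq> span E"
  shows "independent (E \<union> L ` bw)" and "E \<inter> L ` bw = {}" and "inj_on L bw"
proof -
  show inj: "inj_on L bw"
  proof (rule inj_onI)
    fix x y assume "L x = L y"
    then have "rho (L x) = rho (L y)" by simp
    then show "x = y" by simp
  qed
  show disj: "E \<inter> L ` bw = {}"
  proof (rule ccontr)
    assume "E \<inter> L ` bw \<noteq> {}"
    then obtain b where "b \<in> bw" "L b \<in> I" using E(1) by blast
    then have "0 \<in> bw" using rho_I[of "L b"] by simp
    then show False using bw(2) dependent_zero by blast
  qed
  have finE: "finite E" using fd.finiteI_independent[OF E(2)] .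
  have sub: "E \<union> L ` bw \<subseteq> perp B I" using E(1) I_isotropic L_perp by blast
  have "card (E \<union> L ` bw) = card E + card bw"
    using card_Un_disjoint[OF finE _ disj] bw(1) card_image[OF inj] by simp
  also have "\<dots> = dim I + dim (UNIV::'w set)"
    using basis_card_eq_dim[OF E(1) E(3) E(2)] basis_card_eq_dim[of bw UNIV] bw by simp
  finally have card: "card (E \<union> L ` bw) = dim (perp B I)" using dim_perp_reduction by simp
  have "perp B I \<subseteq> span (E \<union> L ` bw)"
  proof
    fix v assume v: "v \<in> perp B I"
    have "rho ` L ` bw = bw" by (simp add: image_image)
    then have "rho ` span (L ` bw) = span bw"
      using linear_span_image[OF rho_linear, of "L ` bw"] by simp
    then obtain u where u: "u \<in> span (L ` bw)" "rho u = rho v" using bw(3) by (metis UNIV_I imageE)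
    have "u \<in> perp B I" using span_minimal[of "L ` bw"] L_perp perp_subspace u(1) by blast
    then have "v - u \<in> I"
      using v u(2) rho_kernel subspace_diff[OF perp_subspace] linear_diff[OF rho_linear] by auto
    then have "v - u \<in> span (E \<union> L ` bw)" using E(3) span_mono[of E "E \<union> L ` bw"] by blast
    moreover have "u \<in> span (E \<union> L ` bw)" using u(1) span_mono[of "L ` bw" "E \<union> L ` bw"] by blast
    ultimately show "v \<in> span (E \<union> L ` bw)" using span_add by fastforce
  qed
  then show "independent (E \<union> L ` bw)"
    using fd.card_eq_dim[OF sub card] finE bw(1) by simp
qed

end

definition bool_sign :: "bool \<Rightarrow> real" where
  "bool_sign s = (if s then 1 else -1)"

context isotropic_reduction begin

text \<open>Hyperbolic completion: lifts of a basis of 'w together with the vectors e \<plusminus> f e,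
  for a basis E of I and hyperbolic partners f, form an orthogonal family with the
  indicated Gram matrix.\<close>
lemma hyperbolic_completion:
  assumes bw: "finite bw" "independent bw" "span bw = UNIV"
    and E: "E \<subseteq> I" "independent E" "I \<subseteq> span E"
  obtains g :: "'w + 'v \<times> bool \<Rightarrow> 'v" where
    "\<And>a b. B (g (Inl a)) (g (Inl b)) = BW a b"
    "\<And>a e s. a \<in> bw \<Longrightarrow> e \<in> E \<Longrightarrow> B (g (Inl a)) (g (Inr (e, s))) = 0"
    "\<And>e s e' s'. e \<in> E \<Longrightarrow> e' \<in> E \<Longrightarrow>
       B (g (Inr (e, s))) (g (Inr (e', s'))) = (if e = e' then bool_sign s + bool_sign s' else 0)"
proof -
  have iso: "B x y = 0" if "x \<in> E" "y \<in> E \<union> L ` bw" for x y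
    using B_I_perp E(1) I_isotropic L_perp that by blast
  obtain f where f_E: "\<And>e g. e \<in> E \<Longrightarrow> g \<in> E \<Longrightarrow> B (f e) g = (if g = e then 1 else 0)"
    and f_L: "\<And>e c. e \<in> E \<Longrightarrow> c \<in> L ` bw \<Longrightarrow> B (f e) c = 0"
    and f_f: "\<And>e g. e \<in> E \<Longrightarrow> g \<in> E \<Longrightarrow> B (f e) (f g) = 0"
    using hyperbolic_partners[OF lifted_basis_independent(1,2)[OF bw E] iso] by blast
  define g where "g i = (case i of Inl b \<Rightarrow> L b | Inr (e, s) \<Rightarrow> e + bool_sign s *\<^sub>R f e)" for i
  show ?thesis
  proof (rule that)
    show "B (g (Inl a)) (g (Inl b)) = BW a b" for a b by (simp add: g_def BW_L)
    show "B (g (Inl a)) (g (Inr (e, s))) = 0" if "a \<in> bw" "e \<in> E" for a e s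
      using B_I_perp[of e "L a"] f_L[of e "L a"] E(1) L_perp that by (auto simp: g_def B_sym)
    show "B (g (Inr (e, s))) (g (Inr (e', s'))) = (if e = e' then bool_sign s + bool_sign s' else 0)"
      if "e \<in> E" "e' \<in> E" for e s e' s'
      using iso[of e e'] f_E[of e e'] f_E[of e' e] f_f[of e e'] that
      by (auto simp: g_def B_sym[of e])
  qed
qed

lemma completion_orthogonal:
  fixes g :: "'w + 'v \<times> bool \<Rightarrow> 'v"
  assumes orth_bw: "\<forall>x\<in>bw. \<forall>y\<in>bw. x \<noteq> y \<longrightarrow> BW x y = 0"
    and g_ll: "\<And>a b. B (g (Inl a)) (g (Inl b)) = BW a b"
    and g_lr: "\<And>a e s. a \<in> bw \<Longrightarrow> e \<in> E \<Longrightarrow> B (g (Inl a)) (g (Inr (e, s))) = 0"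
    and g_rr: "\<And>e s e' s'. e \<in> E \<Longrightarrow> e' \<in> E \<Longrightarrow>
       B (g (Inr (e, s))) (g (Inr (e', s'))) = (if e = e' then bool_sign s + bool_sign s' else 0)"
    and ij: "i \<in> bw <+> E \<times> UNIV" "j \<in> bw <+> E \<times> UNIV" "i \<noteq> j"
  shows "B (g i) (g j) = 0"
proof (cases i)
  case i: (Inl a)
  show ?thesis
  proof (cases j)
    case (Inl b) then show ?thesis using i ij orth_bw g_ll by auto
  next
    case (Inr es) then show ?thesis using i ij g_lr by (cases es) auto
  qed
next
  case i: (Inr es)
  show ?thesis
  proof (cases j)
    case (Inl b) then show ?thesis using i ij g_lr B_sym by (cases es) auto
  next
    case (Inr es') then show ?thesis
      using i ij g_rr by (cases es, cases es') (auto simp: bool_sign_def)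
  qed
qed

lemma signature_reduction:
  assumes sig: "has_signature BW p q"
  shows "has_signature B (p + dim I) (q + dim I)"
proof -
  obtain bw where bw: "finite bw" "independent bw" "span bw = UNIV"
      "\<forall>x\<in>bw. \<forall>y\<in>bw. x \<noteq> y \<longrightarrow> BW x y = 0"
      "card {x\<in>bw. BW x x > 0} = p" "card {x\<in>bw. BW x x < 0} = q"
    using sig unfolding has_signature_def by blast
  obtain E where E: "E \<subseteq> I" "independent E" "I \<subseteq> span E" "card E = dim I"
    using basis_exists by blast
  have finE: "finite E" using fd.finiteI_independent[OF E(2)] .
  obtain g where g_ll: "\<And>a b. B (g (Inl a)) (g (Inl b)) = BW a b"
    and g_lr: "\<And>a e s. a \<in> bw \<Longrightarrow> e \<in> E \<Longrightarrow> B (g (Inl a)) (g (Inr (e, s))) = 0"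
    and g_rr: "\<And>e s e' s'. e \<in> E \<Longrightarrow> e' \<in> E \<Longrightarrow>
       B (g (Inr (e, s))) (g (Inr (e', s'))) = (if e = e' then bool_sign s + bool_sign s' else 0)"
    using hyperbolic_completion[OF bw(1-3) E(1-3)] by blast
  define K where "K = bw <+> E \<times> (UNIV :: bool set)"
  have finK: "finite K" using bw(1) finE by (simp add: K_def)
  have orth: "B (g i) (g j) = 0" if "i \<in> K" "j \<in> K" "i \<noteq> j" for i j
    using completion_orthogonal[OF bw(4) g_ll g_lr g_rr] that unfolding K_def by blast
  have nonnull: "B (g i) (g i) \<noteq> 0" if "i \<in> K" for i
    using that orthogonal_basis_self_nonzero[OF reduced_metric_form bw(2-4)] g_ll g_rr
    by (auto simp: K_def bool_sign_def split: if_splits)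
  have "card K = dim (UNIV::'w set) + 2 * dim I"
    using bw finE E(4) basis_card_eq_dim[of bw UNIV] by (simp add: K_def card_Plus card_cartesian_product)
  also have "\<dots> = dim (UNIV::'v set)"
    using dim_perp[OF I_subspace] dim_perp_reduction by simp
  finally have cardK: "card K = dim (UNIV::'v set)" .
  have "{i\<in>K. B (g i) (g i) > 0} = {b\<in>bw. BW b b > 0} <+> E \<times> {True}"
    using g_ll g_rr by (auto simp: K_def bool_sign_def split: if_splits)
  then have pos: "card {i\<in>K. B (g i) (g i) > 0} = p + dim I"
    using bw(1,5) finE E(4) by (simp add: card_Plus card_cartesian_product)
  have "{i\<in>K. B (g i) (g i) < 0} = {b\<in>bw. BW b b < 0} <+> E \<times> {False}"
    using g_ll g_rr by (auto simp: K_def bool_sign_def split: if_splits)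
  then have neg: "card {i\<in>K. B (g i) (g i) < 0} = q + dim I"
    using bw(1,6) finE E(4) by (simp add: card_Plus card_cartesian_product)
  show ?thesis using orthogonal_family_signature[of K g, OF finK orth nonnull cardK] unfolding pos neg .
qed


text \<open>For lorentzian B the space I is a null line and the reduced form is positive
  definite: otherwise B would be nowhere positive on a subspace of dimension 2.\<close>
lemma lorentzian_reduction:
  assumes lor: "lorentzian B" and nontrivial: "I \<noteq> {0}"
  shows "dim I = 1" and "euclidean_form BW"
proof -
  obtain e where e: "e \<in> I" "e \<noteq> 0" using nontrivial subspace_0[OF I_subspace] by blast
  have null_I: "B x x = 0" if "x \<in> I" for x using B_I_perp I_isotropic that by blast
  have "dim I \<le> 1"
    using lorentzian_nonpositive_subspace[OF lor I_subspace] null_I by simp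
  moreover have "dim I \<noteq> 0" using e fd.dim_eq_0[of I] by blast
  ultimately show "dim I = 1" by linarith
  show "euclidean_form BW" unfolding euclidean_form_def
  proof (intro allI impI)
    fix w :: 'w assume w: "w \<noteq> 0"
    show "BW w w > 0"
    proof (rule ccontr)
      assume nonpos_w: "\<not> BW w w > 0"
      define a where "a = L w"
      have "a \<notin> I" using rho_I[of a] w by (auto simp: a_def)
      moreover have "span {e} \<subseteq> I" using span_minimal[of "{e}" I] e I_subspace by auto
      ultimately have "a \<notin> span {e}" by blast
      then have "independent {a, e}" using e(2) independent_insert[of a "{e}"] by simp
      moreover have "a \<noteq> e" using \<open>a \<notin> I\<close> e(1) by blast
      ultimately have dim2: "dim (span {a, e}) = 2" by (simp add: dim_span_eq_card_independent dim_eq_card_independent)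
      have "B x x \<le> 0" if x: "x \<in> span {a, e}" for x
      proof -
        obtain k where "x - k *\<^sub>R a \<in> span {e}" using x span_insert[of a "{e}"] by auto
        then obtain t where "x - k *\<^sub>R a = t *\<^sub>R e" using span_singleton[of e] by auto
        then have "x = k *\<^sub>R a + t *\<^sub>R e" by (simp add: algebra_simps)
        moreover have "B a e = 0" "B e a = 0" "B e e = 0"
          using B_I_perp[of e a] e(1) L_perp null_I B_sym a_def by auto
        ultimately have "B x x = k * k * BW w w" by (simp add: a_def BW_L algebra_simps)
        then show ?thesis using nonpos_w by (simp add: mult_nonneg_nonpos)
      qed
      then have "dim (span {a, e}) \<le> 1" by (rule lorentzian_nonpositive_subspace[OF lor subspace_span])
      then show False using dim2 by simp
    qed
  qed
qed

end

locale lie_nalgebra =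
  fixes n :: nat and br :: "(nat \<Rightarrow> 'v::real_vector) \<Rightarrow> 'v"
  assumes n2: "2 \<le> n" and lie: "lie_nalg n br"
begin

lemma br_cong: "(\<And>i. i < n \<Longrightarrow> x i = y i) \<Longrightarrow> br x = br y"
  using lie unfolding lie_nalg_def nbracket_def by blast

lemma br_linear: "i < n \<Longrightarrow> linear (\<lambda>v. br (x(i := v)))"
  using lie unfolding lie_nalg_def nbracket_def by blast

lemma br_alternating: "i < n \<Longrightarrow> j < n \<Longrightarrow> i \<noteq> j \<Longrightarrow> x i = x j \<Longrightarrow> br x = 0"
  using lie unfolding lie_nalg_def nbracket_def by blast

lemma fundamental_identity: "ad n br x (br y) = (\<Sum>i<n. br (y(i := ad n br x (y i))))"
  using lie unfolding lie_nalg_def by blast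

lemma br_swap:
  assumes ij: "i < n" "j < n" "i \<noteq> j"
  shows "br (x(i := x j, j := x i)) = - br x"
proof -
  define f where "f a b = br (x(i := a, j := b))" for a b
  have lin2: "linear (f a)" for a unfolding f_def using br_linear[OF ij(2), of "x(i := a)"] by simp
  have lin1: "linear (\<lambda>a. f a b)" for b
    using br_linear[OF ij(1), of "x(j := b)"] ij(3) by (simp add: f_def fun_upd_twist)
  have diag: "f c c = 0" for c unfolding f_def using br_alternating[OF ij, of "x(i := c, j := c)"] ij(3) by simp
  have "0 = f (x i + x j) (x i + x j)" using diag by simp
  also have "\<dots> = f (x i) (x i) + f (x i) (x j) + (f (x j) (x i) + f (x j) (x j))"
    by (simp add: linear_add[OF lin1] linear_add[OF lin2])
  finally have "f (x j) (x i) = - f (x i) (x j)" using diag by (simp add: eq_neg_iff_add_eq_0 add.commute)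
  then show ?thesis by (simp add: f_def)
qed

lemma ideal_subspace: "lie_ideal n br J \<Longrightarrow> subspace J"
  unfolding lie_ideal_def by auto

text \<open>By skew-symmetry, an ideal absorbs the bracket in every argument slot, not only the first.\<close>
lemma ideal_slot:
  assumes J: "lie_ideal n br J" and i: "i < n" "x i \<in> J"
  shows "br x \<in> J"
proof (cases "i = 0")
  case True then show ?thesis using J i unfolding lie_ideal_def by auto
next
  case False
  define y where "y = x(0 := x i, i := x 0)"
  have "br y \<in> J" using J i False unfolding lie_ideal_def y_def by auto
  moreover have "y(0 := y i, i := y 0) = x" using False unfolding y_def by (auto simp: fun_eq_iff)
  ultimately show ?thesis
    using br_swap[of 0 i y] i False ideal_subspace[OF J] by (metis gr_zeroI less_zeroE subspace_neg)
qed

lemma br_diff_ideal: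
  assumes J: "lie_ideal n br J" and d: "\<And>i. i < n \<Longrightarrow> x i - y i \<in> J"
  shows "br x - br y \<in> J"
proof -
  have S: "subspace J" using ideal_subspace[OF J] .
  define z where "z m = (\<lambda>i. if i < m then y i else x i)" for m
  have "br x - br (z m) \<in> J" if "m \<le> n" for m
    using that
  proof (induction m)
    case 0
    then show ?case using S by (simp add: z_def subspace_0)
  next
    case (Suc m)
    then have m: "m < n" by simp
    define w where "w = z (Suc m)"
    have "z m = w(m := x m)" "z (Suc m) = w(m := y m)" unfolding w_def z_def by (auto simp: fun_eq_iff)
    then have "br (z m) - br (z (Suc m)) = br (w(m := x m - y m))"
      using linear_diff[OF br_linear[OF m, of w]] by simp
    also have "\<dots> \<in> J" using ideal_slot[OF J m, of "w(m := x m - y m)"] d[OF m] by simp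
    finally have "br (z m) - br (z (Suc m)) \<in> J" .
    moreover have "br x - br (z m) \<in> J" using Suc.IH m by simp
    ultimately have "(br x - br (z m)) + (br (z m) - br (z (Suc m))) \<in> J"
      using subspace_add[OF S] by blast
    then show ?case by simp
  qed
  moreover have "br (z n) = br y" by (rule br_cong) (simp add: z_def)
  ultimately show ?thesis by fastforce
qed

lemma induced_bracket_exists:
  fixes pi :: "'v \<Rightarrow> 'u::real_vector"
  assumes pi: "linear pi" and onto: "pi ` S = UNIV" and S: "subspace S"
    and J: "lie_ideal n br J" and ker: "{v \<in> S. pi v = 0} = J"
  shows "\<exists>brU. \<forall>x. (\<forall>i<n. x i \<in> S) \<longrightarrow> pi (br x) = brU (pi \<circ> x)"
proof -
  define L where "L = lift_along pi S"
  have L: "L u \<in> S" "pi (L u) = u" for u using lift_along[OF onto] L_def by auto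
  have "pi (br x) = pi (br (L \<circ> (pi \<circ> x)))" if x: "\<forall>i<n. x i \<in> S" for x
  proof -
    have "x i - L (pi (x i)) \<in> J" if i: "i < n" for i
      using x i L subspace_diff[OF S] linear_diff[OF pi] ker by auto
    then have "br x - br (L \<circ> (pi \<circ> x)) \<in> J" by (intro br_diff_ideal[OF J]) simp
    then have "pi (br x - br (L \<circ> (pi \<circ> x))) = 0" using ker by blast
    then show ?thesis using linear_diff[OF pi] by simp
  qed
  then show ?thesis by (intro exI[of _ "\<lambda>y. pi (br (L \<circ> y))"]) simp
qed

text \<open>The preimage of an ideal of a quotient is an ideal; hence the quotient by a maximal
  ideal is simple or one-dimensional.\<close>
lemma quotient_by_maximal_simple:
  fixes pi :: "'v \<Rightarrow> 'u::real_vector" and brU :: "(nat \<Rightarrow> 'u) \<Rightarrow> 'u"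
  assumes pi: "linear pi" and sj: "surj pi" and ker: "{v. pi v = 0} = P"
    and maxP: "maximal_ideal n br P" and rel: "\<And>x. pi (br x) = brU (pi \<circ> x)"
  shows "simple_nalg n brU \<or> one_dim TYPE('u)"
proof -
  have "K = {0} \<or> K = UNIV" if K: "lie_ideal n brU K" for K
  proof -
    have KS: "subspace K" using K unfolding lie_ideal_def by auto
    define J where "J = {v. pi v \<in> K}"
    have "lie_ideal n br J"
      unfolding lie_ideal_def J_def
      using linear_subspace_linear_preimage[OF pi KS] K rel unfolding lie_ideal_def by simp
    moreover have "P \<subseteq> J" using ker subspace_0[OF KS] J_def by auto
    ultimately have "J = P \<or> J = UNIV" using maxP unfolding maximal_ideal_def by blast
    moreover have "k = 0" if "J = P" "k \<in> K" for k
    proof -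
      obtain v where "k = pi v" using sj by (metis surjD)
      then show "k = 0" using that ker unfolding J_def by auto
    qed
    moreover have "k \<in> K" if "J = UNIV" for k
    proof -
      obtain v where "k = pi v" using sj by (metis surjD)
      then show "k \<in> K" using that unfolding J_def by auto
    qed
    ultimately show ?thesis using subspace_0[OF KS] by blast
  qed
  then show ?thesis unfolding simple_nalg_def by blast
qed

end

text \<open>A bracket induced on 'u by a linear surjection pi from an ideal S satisfies the axioms
  of a Lie n-algebra, since all of them can be checked on lifts.\<close>
locale induced_bracket = lie_nalgebra n br
  for n :: nat and br :: "(nat \<Rightarrow> 'v::real_vector) \<Rightarrow> 'v" +
  fixes pi :: "'v \<Rightarrow> 'u::real_vector" and S :: "'v set" and brU :: "(nat \<Rightarrow> 'u) \<Rightarrow> 'u"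
  assumes pi_linear: "linear pi" and S_ideal: "lie_ideal n br S" and pi_onto: "pi ` S = UNIV"
    and pi_br: "\<And>x. (\<And>i. i < n \<Longrightarrow> x i \<in> S) \<Longrightarrow> pi (br x) = brU (pi \<circ> x)"
begin

abbreviation L :: "'u \<Rightarrow> 'v" where "L \<equiv> lift_along pi S"

lemma L_in: "L u \<in> S" and pi_L [simp]: "pi (L u) = u"
  using lift_along[OF pi_onto] by auto

lemma brU_lift: "brU z = pi (br (L \<circ> z))"
proof -
  have "pi \<circ> (L \<circ> z) = z" by (simp add: fun_eq_iff)
  then show ?thesis using pi_br[of "L \<circ> z"] L_in by simp
qed

lemma brU_lift_upd:
  assumes "v \<in> S" shows "brU (z(k := pi v)) = pi (br ((L \<circ> z)(k := v)))"
proof -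
  have "pi \<circ> (L \<circ> z)(k := v) = z(k := pi v)" by (simp add: fun_eq_iff)
  moreover have "pi (br ((L \<circ> z)(k := v))) = brU (pi \<circ> (L \<circ> z)(k := v))"
    by (rule pi_br) (simp add: L_in assms)
  ultimately show ?thesis by simp
qed

lemma brU_linear: "i < n \<Longrightarrow> linear (\<lambda>v. brU (x(i := v)))"
proof (rule linearI)
  fix a b assume i: "i < n"
  have "L a + L b \<in> S" using L_in subspace_add[OF ideal_subspace[OF S_ideal]] by blast
  then have "brU (x(i := a + b)) = pi (br ((L \<circ> x)(i := L a + L b)))"
    using brU_lift_upd[of "L a + L b" x i] by (simp add: linear_add[OF pi_linear])
  then show "brU (x(i := a + b)) = brU (x(i := a)) + brU (x(i := b))"
    using linear_add[OF br_linear[OF i, of "L \<circ> x"]] linear_add[OF pi_linear]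
      brU_lift_upd[OF L_in, of x i] by (metis pi_L)
next
  fix c a assume i: "i < n"
  have "c *\<^sub>R L a \<in> S" using L_in subspace_scale[OF ideal_subspace[OF S_ideal]] by blast
  then have "brU (x(i := c *\<^sub>R a)) = pi (br ((L \<circ> x)(i := c *\<^sub>R L a)))"
    using brU_lift_upd[of "c *\<^sub>R L a" x i] by (simp add: linear_scale[OF pi_linear])
  then show "brU (x(i := c *\<^sub>R a)) = c *\<^sub>R brU (x(i := a))"
    using linear_scale[OF br_linear[OF i, of "L \<circ> x"]] linear_scale[OF pi_linear]
      brU_lift_upd[OF L_in, of x i] by (metis pi_L)
qed

lemma brU_fundamental_identity:
  "ad n brU x (brU y) = (\<Sum>i<n. brU (y(i := ad n brU x (y i))))"
proof -
  define X where "X = L \<circ> x"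
  define Y where "Y = L \<circ> y"
  have XS: "X j \<in> S" "Y j \<in> S" for j by (auto simp: X_def Y_def L_in)
  have closed: "br Z \<in> S" if "\<And>j. Z j \<in> S" for Z
    using ideal_slot[OF S_ideal, of 0 Z] that n2 by simp
  have ad_lift: "ad n brU x (pi v) = pi (ad n br X v)" if "v \<in> S" for v
    unfolding ad_def X_def using brU_lift_upd[OF that] .
  have "br Y \<in> S" by (rule closed) (rule XS(2))
  then have "ad n brU x (brU y) = pi (ad n br X (br Y))"
    using ad_lift brU_lift[of y] Y_def by simp
  also have "\<dots> = (\<Sum>i<n. pi (br (Y(i := ad n br X (Y i)))))"
    by (simp add: fundamental_identity linear_sum[OF pi_linear])
  also have "\<dots> = (\<Sum>i<n. brU (y(i := ad n brU x (y i))))"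
  proof (rule sum.cong[OF refl])
    fix i
    have "ad n br X (Y i) \<in> S" unfolding ad_def by (rule closed) (use XS in simp)
    then show "pi (br (Y(i := ad n br X (Y i)))) = brU (y(i := ad n brU x (y i)))"
      using brU_lift_upd[of "ad n br X (Y i)" y i] ad_lift[OF XS(2), of i] by (simp add: Y_def)
  qed
  finally show ?thesis .
qed

lemma induced_lie_nalg: "lie_nalg n brU"
  unfolding lie_nalg_def nbracket_def
proof (intro conjI allI impI brU_linear brU_fundamental_identity)
  fix x y :: "nat \<Rightarrow> 'u" assume "\<forall>i<n. x i = y i"
  then show "brU x = brU y" using brU_lift br_cong[of "L \<circ> x" "L \<circ> y"] by simp
next
  fix x :: "nat \<Rightarrow> 'u" and i j assume "i < n \<and> j < n \<and> i \<noteq> j \<and> x i = x j"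
  then show "brU x = 0" using brU_lift br_alternating[of i j "L \<circ> x"] linear_0[OF pi_linear] by simp
qed auto

end

locale metric_lie_nalgebra = fin_metric_space B + lie_nalgebra n br
  for B :: "'v::real_vector \<Rightarrow> 'v \<Rightarrow> real" and n :: nat and br :: "(nat \<Rightarrow> 'v) \<Rightarrow> 'v" +
  assumes invariant: "B (ad n br x y) z = - B y (ad n br x z)"
begin

lemma invariant_last: "B (br (x(n-1 := y))) z = - B y (br (x(n-1 := z)))"
  using invariant unfolding ad_def .

lemma perp_ideal:
  assumes J: "lie_ideal n br J" shows "lie_ideal n br (perp B J)"
  unfolding lie_ideal_def
proof (intro conjI allI impI perp_subspace)
  fix x :: "nat \<Rightarrow> 'v" assume x0: "x 0 \<in> perp B J"
  have n0: "0 < n" "n - 1 < n" "n - 1 \<noteq> 0" using n2 by auto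
  define y where "y = x(0 := x (n-1), n-1 := x 0)"
  have "y(0 := y (n-1), n-1 := y 0) = x" using n0 unfolding y_def by (auto simp: fun_eq_iff)
  then have bx: "br x = - br y" using br_swap[of 0 "n-1" y] n0 by auto
  have "B (br x) w = 0" if w: "w \<in> J" for w
  proof -
    have "y(n-1 := x 0) = y" by (simp add: y_def)
    then have "B (br y) w = - B (x 0) (br (y(n-1 := w)))" using invariant_last[of y "x 0" w] by simp
    moreover have "br (y(n-1 := w)) \<in> J" using ideal_slot[OF J n0(2)] w by simp
    ultimately show ?thesis using x0 bx unfolding perp_def by simp
  qed
  then show "br x \<in> perp B J" unfolding perp_def by (auto simp: B_sym)
qed

lemma ideal_Int: "lie_ideal n br I \<Longrightarrow> lie_ideal n br J \<Longrightarrow> lie_ideal n br (I \<inter> J)"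
  unfolding lie_ideal_def using subspace_inter by blast

text \<open>Every nonzero ideal contains a minimal one: take a nonzero subideal of least dimension.\<close>
lemma minimal_ideal_exists:
  assumes J: "lie_ideal n br J" "J \<noteq> {0}"
  shows "\<exists>I. minimal_ideal n br I \<and> I \<subseteq> J"
proof -
  define P where "P k \<longleftrightarrow> (\<exists>I. lie_ideal n br I \<and> I \<noteq> {0} \<and> I \<subseteq> J \<and> dim I = k)" for k
  have "P (dim J)" using J by (auto simp: P_def)
  then have "P (LEAST k. P k)" by (rule LeastI)
  then obtain I where I: "lie_ideal n br I" "I \<noteq> {0}" "I \<subseteq> J" "dim I = (LEAST k. P k)"
    unfolding P_def by blast
  have "K = {0} \<or> K = I" if K: "lie_ideal n br K" "K \<subseteq> I" for K
  proof (cases "K = {0}")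
    case False
    then have "P (dim K)" using K I(3) unfolding P_def by blast
    then have "dim I \<le> dim K" using I(4) by (simp add: Least_le)
    then show ?thesis using fd.subspace_dim_equal[OF ideal_subspace[OF K(1)] ideal_subspace[OF I(1)] K(2)] by simp
  qed simp
  then show ?thesis using I(1-3) unfolding minimal_ideal_def by blast
qed

lemma nontrivial_minimal_ideal_exists:
  assumes "\<not> simple_nalg n br" "\<not> one_dim TYPE('v)"
  shows "\<exists>I. minimal_ideal n br I \<and> I \<noteq> {0} \<and> I \<noteq> UNIV"
proof -
  obtain J where J: "lie_ideal n br J" "J \<noteq> {0}" "J \<noteq> UNIV"
    using assms unfolding simple_nalg_def by blast
  obtain I where "minimal_ideal n br I" "I \<subseteq> J" using minimal_ideal_exists[OF J(1,2)] by blast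
  then show ?thesis using J(3) unfolding minimal_ideal_def by blast
qed

lemma induced_invariant:
  fixes rho :: "'v \<Rightarrow> 'w::real_vector"
  assumes ind: "induced_bracket n br rho S brW"
    and relB: "\<And>a b. a \<in> S \<Longrightarrow> b \<in> S \<Longrightarrow> BW (rho a) (rho b) = B a b"
  shows "BW (ad n brW x y) z = - BW y (ad n brW x z)"
proof -
  interpret induced_bracket n br rho S brW by (rule ind)
  define X where "X = L \<circ> x"
  have ad_lift: "ad n brW x v = rho (br (X(n-1 := L v)))" for v
    using brU_lift_upd[OF L_in, of x "n-1" v] by (simp add: ad_def X_def)
  have closed: "br (X(n-1 := L v)) \<in> S" for v
    using ideal_slot[OF S_ideal, of "n-1"] n2 L_in by simp
  have "BW (ad n brW x y) z = B (br (X(n-1 := L y))) (L z)"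
    using relB[OF closed L_in] ad_lift by simp
  also have "\<dots> = - B (L y) (br (X(n-1 := L z)))" by (rule invariant_last)
  also have "\<dots> = - BW y (ad n brW x z)"
    using relB[OF L_in closed] ad_lift by simp
  finally show ?thesis .
qed

end

locale minimal_ideal_setting = metric_lie_nalgebra B n br
  for B :: "'v::real_vector \<Rightarrow> 'v \<Rightarrow> real" and n :: nat and br :: "(nat \<Rightarrow> 'v) \<Rightarrow> 'v" +
  fixes I :: "'v set"
  assumes indecomposable: "indecomposable n br B"
    and I_minimal: "minimal_ideal n br I" and I_proper: "I \<noteq> UNIV"
begin

lemma I_ideal: "lie_ideal n br I" and I_nonzero: "I \<noteq> {0}"
  using I_minimal unfolding minimal_ideal_def by auto

lemma I_subspace: "subspace I"
  using ideal_subspace[OF I_ideal] .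

lemma perp_I_ideal: "lie_ideal n br (perp B I)"
  using perp_ideal[OF I_ideal] .

text \<open>The ideal I \<inter> perp B I is either I or 0; in the latter case I would be a
  nondegenerate proper ideal, contradicting indecomposability.\<close>
lemma I_isotropic: "I \<subseteq> perp B I"
proof -
  have "I \<inter> perp B I = {0} \<or> I \<inter> perp B I = I"
    using ideal_Int[OF I_ideal perp_I_ideal] I_minimal unfolding minimal_ideal_def by blast
  moreover have "I \<inter> perp B I \<noteq> {0}"
  proof
    assume "I \<inter> perp B I = {0}"
    then have "nondegenerate_on B I" unfolding nondegenerate_on_def perp_def by auto
    then show False using indecomposable I_ideal I_nonzero I_proper unfolding indecomposable_def by blast
  qed
  ultimately show ?thesis by blast
qed

text \<open>By invariance, [I, V, ..., V, perp B I] is orthogonal to everything.\<close>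
lemma bracket_I_perp:
  assumes "y 0 \<in> I" "y (n-1) \<in> perp B I" shows "br y = 0"
proof -
  have "B (br y) z = 0" for z
  proof -
    have "B (br y) z = - B (y (n-1)) (br (y(n-1 := z)))"
      using invariant_last[of y "y (n-1)" z] by simp
    moreover have "br (y(n-1 := z)) \<in> I" using ideal_slot[OF I_ideal, of 0] assms(1) n2 by simp
    then have "B (y (n-1)) (br (y(n-1 := z))) = 0" using assms(2) unfolding perp_def by blast
    ultimately show ?thesis by simp
  qed
  then show ?thesis using B_nondegenerate by blast
qed

lemma bracket_I_I: "\<forall>x. x 0 \<in> I \<and> x 1 \<in> I \<longrightarrow> br x = 0"
proof (intro allI impI)
  fix x :: "nat \<Rightarrow> 'v" assume x: "x 0 \<in> I \<and> x 1 \<in> I"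
  show "br x = 0"
  proof (cases "n - 1 = 1")
    case True then show ?thesis using bracket_I_perp[of x] x I_isotropic by auto
  next
    case False
    define y where "y = x(1 := x (n-1), n-1 := x 1)"
    have "y(1 := y (n-1), n-1 := y 1) = x" using False unfolding y_def by (auto simp: fun_eq_iff)
    then have "br x = - br y" using br_swap[of 1 "n-1" y] n2 False by auto
    moreover have "y 0 = x 0" "y (n-1) = x 1" using n2 unfolding y_def by auto
    then have "br y = 0" using bracket_I_perp[of y] x I_isotropic by auto
    ultimately show ?thesis by simp
  qed
qed

text \<open>Taking orthogonal complements reverses inclusions of ideals, so the complement of a
  minimal ideal is maximal.\<close>
lemma perp_I_maximal: "maximal_ideal n br (perp B I)"
  unfolding maximal_ideal_def
proof (intro conjI allI impI perp_I_ideal)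
  show "perp B I \<noteq> UNIV"
    using perp_perp[OF I_subspace] perp_UNIV I_nonzero by force
  fix J assume J: "lie_ideal n br J \<and> perp B I \<subseteq> J"
  have "perp B J \<subseteq> I" using perp_antimono[of "perp B I" J] J perp_perp[OF I_subspace] by simp
  then have "perp B J = {0} \<or> perp B J = I"
    using perp_ideal J I_minimal unfolding minimal_ideal_def by blast
  moreover have "J = perp B (perp B J)" using perp_perp[OF ideal_subspace] J by simp
  ultimately show "J = perp B I \<or> J = UNIV" using perp_UNIV perp_perp[OF subspace_UNIV] by auto
qed

lemma quotient_pairing:
  fixes pi :: "'v \<Rightarrow> 'u::real_vector"
  assumes pi: "linear pi" "surj pi" and ker: "{v. pi v = 0} = perp B I"
  shows "\<exists>P. (\<forall>u w. w \<in> I \<longrightarrow> P (pi u) w = B u w) \<and> (\<forall>a. (\<forall>w\<in>I. P a w = 0) \<longrightarrow> a = 0)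
           \<and> (\<forall>w\<in>I. (\<forall>a. P a w = 0) \<longrightarrow> w = 0)"
proof -
  define L where "L = lift_along pi UNIV"
  have L: "pi (L a) = a" for a using lift_along(2)[of pi UNIV] pi(2) L_def by simp
  define P where "P a w = B (L a) w" for a w
  have P_pi: "P (pi u) w = B u w" if w: "w \<in> I" for u w
  proof -
    have "pi (L (pi u) - u) = 0" using L linear_diff[OF pi(1)] by simp
    then have "L (pi u) - u \<in> perp B I" using ker by blast
    then have "B (L (pi u) - u) w = 0" using w unfolding perp_def by blast
    then show ?thesis unfolding P_def by simp
  qed
  have P_left: "a = 0" if "\<forall>w\<in>I. P a w = 0" for a
  proof -
    have "L a \<in> perp B I" using that unfolding P_def perp_def by blast
    then have "L a \<in> {v. pi v = 0}" using ker by simp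
    then show "a = 0" using L[of a] by simp
  qed
  have P_right: "w = 0" if "w \<in> I" "\<forall>a. P a w = 0" for w
  proof -
    have "B w u = 0" for u using P_pi[OF that(1), of u] that(2) by (simp add: B_sym)
    then show "w = 0" by (rule B_nondegenerate)
  qed
  show ?thesis by (rule exI[of _ P]) (use P_pi P_left P_right in blast)
qed

text \<open>dim U = codim perp B I = dim I.\<close>
lemma quotient_dim:
  fixes pi :: "'v \<Rightarrow> 'u::real_vector"
  assumes pi: "linear pi" "surj pi" and ker: "{v. pi v = 0} = perp B I"
  shows "dim I = dim (UNIV::'u set)"
  using rank_nullity[OF pi(1) subspace_UNIV] ker pi(2) dim_perp[OF I_subspace] by simp

lemma quotient_by_perp:
  "\<forall>(\<pi>::'v \<Rightarrow> 'u::real_vector). linear \<pi> \<and> surj \<pi> \<and> {v. \<pi> v = 0} = perp B I \<longrightarrow>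
          (\<exists>brU. \<forall>x. \<pi> (br x) = brU (\<pi> \<circ> x))
        \<and> (\<forall>brU. (\<forall>x. \<pi> (br x) = brU (\<pi> \<circ> x)) \<longrightarrow>
               lie_nalg n brU \<and> (simple_nalg n brU \<or> one_dim TYPE('u)))
        \<and> (\<exists>P. (\<forall>u w. w \<in> I \<longrightarrow> P (\<pi> u) w = B u w)
               \<and> (\<forall>a. (\<forall>w\<in>I. P a w = 0) \<longrightarrow> a = 0)
               \<and> (\<forall>w\<in>I. (\<forall>a. P a w = 0) \<longrightarrow> w = 0))
        \<and> dim I = dim (UNIV::'u set)"
proof (intro allI impI, elim conjE, intro conjI allI impI)
  fix pi :: "'v \<Rightarrow> 'u" assume pi: "linear pi" "surj pi" and ker: "{v. pi v = 0} = perp B I"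
  then show "\<exists>brU. \<forall>x. pi (br x) = brU (pi \<circ> x)"
    using induced_bracket_exists[OF pi(1) _ subspace_UNIV perp_I_ideal] by simp
  fix brU assume rel: "\<forall>x. pi (br x) = brU (pi \<circ> x)"
  have "lie_ideal n br UNIV" unfolding lie_ideal_def by simp
  then have "induced_bracket n br pi UNIV brU"
    by (intro induced_bracket.intro lie_nalgebra_axioms induced_bracket_axioms.intro)
      (use pi rel in auto)
  then show "lie_nalg n brU" by (rule induced_bracket.induced_lie_nalg)
  show "simple_nalg n brU \<or> one_dim TYPE('u)"
    by (rule quotient_by_maximal_simple[OF pi ker perp_I_maximal]) (use rel in simp)
qed (rule quotient_pairing quotient_dim; assumption)+

lemma reduction_exists:
  fixes rho :: "'v \<Rightarrow> 'w::real_vector"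
  assumes rho: "linear rho" "rho ` perp B I = UNIV" "{v \<in> perp B I. rho v = 0} = I"
  shows "\<exists>brW BW. (\<forall>x. (\<forall>i<n. x i \<in> perp B I) \<longrightarrow> rho (br x) = brW (rho \<circ> x))
                  \<and> (\<forall>a\<in>perp B I. \<forall>b\<in>perp B I. BW (rho a) (rho b) = B a b)"
proof -
  obtain brW where relW: "\<forall>x. (\<forall>i<n. x i \<in> perp B I) \<longrightarrow> rho (br x) = brW (rho \<circ> x)"
    using induced_bracket_exists[OF rho(1,2) perp_subspace I_ideal rho(3)] by blast
  obtain BW where relB: "\<forall>a\<in>perp B I. \<forall>b\<in>perp B I. BW (rho a) (rho b) = B a b"
    using reduced_form_exists[OF rho] by blast
  show ?thesis using relW relB by (intro exI[of _ brW] exI[of _ BW] conjI)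
qed

lemma reduction_properties:
  fixes rho :: "'v \<Rightarrow> 'w::real_vector"
  assumes rho: "linear rho" "rho ` perp B I = UNIV" "{v \<in> perp B I. rho v = 0} = I"
    and relW: "\<forall>x. (\<forall>i<n. x i \<in> perp B I) \<longrightarrow> rho (br x) = brW (rho \<circ> x)"
    and relB: "\<forall>a\<in>perp B I. \<forall>b\<in>perp B I. BW (rho a) (rho b) = B a b"
  shows "metric_lie_nalg n brW BW
       \<and> (\<forall>p q. has_signature BW p q \<longrightarrow> has_signature B (p + dim I) (q + dim I))
       \<and> (lorentzian B \<longrightarrow> dim I = 1 \<and> euclidean_form BW)"
proof -
  have induced: "induced_bracket n br rho (perp B I) brW"
    by (intro induced_bracket.intro lie_nalgebra_axioms induced_bracket_axioms.intro)
      (use rho relW perp_I_ideal in auto)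
  interpret W: isotropic_reduction B I rho BW
    by (intro isotropic_reduction.intro fin_metric_space_axioms isotropic_reduction_axioms.intro)
      (use rho relB in auto)
  have "metric_lie_nalg n brW BW"
    unfolding metric_lie_nalg_def
  proof (intro conjI allI induced_bracket.induced_lie_nalg[OF induced] W.reduced_metric_form)
    show "BW (ad n brW x y) z = - BW y (ad n brW x z)" for x y z
      by (rule induced_invariant[OF induced]) (use relB in blast)
  qed
  moreover have "has_signature B (p + dim I) (q + dim I)" if "has_signature BW p q" for p q
    using W.signature_reduction that .
  moreover have "dim I = 1 \<and> euclidean_form BW" if "lorentzian B"
    using W.lorentzian_reduction[OF that I_nonzero] by simp
  ultimately show ?thesis by blast
qed

lemma reduction_by_I:
  "\<forall>(\<rho>::'v \<Rightarrow> 'w::real_vector). linear \<rho> \<and> \<rho> ` perp B I = UNIV \<and>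
            {v \<in> perp B I. \<rho> v = 0} = I \<longrightarrow>
          (\<exists>brW BW. (\<forall>x. (\<forall>i<n. x i \<in> perp B I) \<longrightarrow> \<rho> (br x) = brW (\<rho> \<circ> x))
                  \<and> (\<forall>a\<in>perp B I. \<forall>b\<in>perp B I. BW (\<rho> a) (\<rho> b) = B a b))
        \<and> (\<forall>brW BW. (\<forall>x. (\<forall>i<n. x i \<in> perp B I) \<longrightarrow> \<rho> (br x) = brW (\<rho> \<circ> x))
                  \<and> (\<forall>a\<in>perp B I. \<forall>b\<in>perp B I. BW (\<rho> a) (\<rho> b) = B a b) \<longrightarrow>
               metric_lie_nalg n brW BW
             \<and> (\<forall>p q. has_signature BW p q \<longrightarrow> has_signature B (p + dim I) (q + dim I))
             \<and> (lorentzian B \<longrightarrow> dim I = 1 \<and> euclidean_form BW))"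
proof (intro allI impI, elim conjE, rule conjI)
  fix rho :: "'v \<Rightarrow> 'w" assume rho: "linear rho" "rho ` perp B I = UNIV" "{v \<in> perp B I. rho v = 0} = I"
  then show "\<exists>brW BW. (\<forall>x. (\<forall>i<n. x i \<in> perp B I) \<longrightarrow> rho (br x) = brW (rho \<circ> x))
                  \<and> (\<forall>a\<in>perp B I. \<forall>b\<in>perp B I. BW (rho a) (rho b) = B a b)"
    by (rule reduction_exists)
  show "\<forall>brW BW. (\<forall>x. (\<forall>i<n. x i \<in> perp B I) \<longrightarrow> rho (br x) = brW (rho \<circ> x))
                  \<and> (\<forall>a\<in>perp B I. \<forall>b\<in>perp B I. BW (rho a) (rho b) = B a b) \<longrightarrow>
               metric_lie_nalg n brW BW
             \<and> (\<forall>p q. has_signature BW p q \<longrightarrow> has_signature B (p + dim I) (q + dim I))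
             \<and> (lorentzian B \<longrightarrow> dim I = 1 \<and> euclidean_form BW)"
    by (intro allI impI, elim conjE) (rule reduction_properties[OF rho])
qed

end

theorem mainTheorem8:
  fixes n :: nat
    and br :: "(nat \<Rightarrow> 'v::real_vector) \<Rightarrow> 'v"
    and B :: "'v \<Rightarrow> 'v \<Rightarrow> real"
  assumes n2: "n \<ge> 2"
    and fin: "fin_dim_space TYPE('v)"
    and nonzero: "(UNIV::'v set) \<noteq> {0}"
    and metric: "metric_lie_nalg n br B"
    and indec: "indecomposable n br B"
    and not_simple: "\<not> simple_nalg n br"
    and not_1d: "\<not> one_dim TYPE('v)"
  shows "(\<exists>I. minimal_ideal n br I \<and> I \<noteq> {0} \<and> I \<noteq> UNIV) \<and>
    (\<forall>I. minimal_ideal n br I \<and> I \<noteq> {0} \<and> I \<noteq> UNIV \<longrightarrow>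
       I \<subseteq> perp B I
     \<and> (\<forall>x. x 0 \<in> I \<and> x 1 \<in> I \<longrightarrow> br x = 0)
     \<and> maximal_ideal n br (perp B I)
     \<and> (\<forall>(\<pi>::'v \<Rightarrow> 'u::real_vector). linear \<pi> \<and> surj \<pi> \<and> {v. \<pi> v = 0} = perp B I \<longrightarrow>
          (\<exists>brU. \<forall>x. \<pi> (br x) = brU (\<pi> \<circ> x))
        \<and> (\<forall>brU. (\<forall>x. \<pi> (br x) = brU (\<pi> \<circ> x)) \<longrightarrow>
               lie_nalg n brU \<and> (simple_nalg n brU \<or> one_dim TYPE('u)))
        \<and> (\<exists>P. (\<forall>u w. w \<in> I \<longrightarrow> P (\<pi> u) w = B u w)
               \<and> (\<forall>a. (\<forall>w\<in>I. P a w = 0) \<longrightarrow> a = 0)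
               \<and> (\<forall>w\<in>I. (\<forall>a. P a w = 0) \<longrightarrow> w = 0))
        \<and> dim I = dim (UNIV::'u set))
     \<and> (\<forall>(\<rho>::'v \<Rightarrow> 'w::real_vector). linear \<rho> \<and> \<rho> ` perp B I = UNIV \<and>
            {v \<in> perp B I. \<rho> v = 0} = I \<longrightarrow>
          (\<exists>brW BW. (\<forall>x. (\<forall>i<n. x i \<in> perp B I) \<longrightarrow> \<rho> (br x) = brW (\<rho> \<circ> x))
                  \<and> (\<forall>a\<in>perp B I. \<forall>b\<in>perp B I. BW (\<rho> a) (\<rho> b) = B a b))
        \<and> (\<forall>brW BW. (\<forall>x. (\<forall>i<n. x i \<in> perp B I) \<longrightarrow> \<rho> (br x) = brW (\<rho> \<circ> x))
                  \<and> (\<forall>a\<in>perp B I. \<forall>b\<in>perp B I. BW (\<rho> a) (\<rho> b) = B a b) \<longrightarrow>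
               metric_lie_nalg n brW BW
             \<and> (\<forall>p q. has_signature BW p q \<longrightarrow> has_signature B (p + dim I) (q + dim I))
             \<and> (lorentzian B \<longrightarrow> dim I = 1 \<and> euclidean_form BW))))"
proof -
  interpret metric_lie_nalgebra B n br
    using fin n2 metric unfolding metric_lie_nalg_def by unfold_locales auto
  have setting: "minimal_ideal_setting B n br I" if "minimal_ideal n br I" "I \<noteq> UNIV" for I
    using indec that by unfold_locales
  show ?thesis
    by (rule conjI[OF nontrivial_minimal_ideal_exists[OF not_simple not_1d]], intro allI impI,
        elim conjE, intro conjI minimal_ideal_setting.I_isotropic[OF setting]
        minimal_ideal_setting.bracket_I_I[OF setting] minimal_ideal_setting.perp_I_maximal[OF setting]
        minimal_ideal_setting.quotient_by_perp[OF setting] minimal_ideal_setting.reduction_by_I[OF setting])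
qed

end
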